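(* Let $m=p_1^{\alpha_1}p_2^{\alpha_2}$, where $p_1,p_2>2$ are distinct primes and $\alpha_1,\alpha_2$ are positive integers. Let $t=\mathrm{ord}_m(2)$ and let $\gamma\in\mathbb{F}_{2^t}^*$ be a primitive $m$th root of unity. Let $\rho(z_1,z_2)=(1+z_2^{-1})(1+z_1^{-1})^{-1}$ and let $$\mathcal{D}=\{(z_1,z_2)\in(\mathbb{F}_{2^t}^*\setminus\{1\})^2:\ \mathrm{ord}(z_1)\mid p_1^{\alpha_1},\ \mathrm{ord}(z_2)\mid p_2^{\alpha_2}\},$$ where $\mathrm{ord}(z)$ denotes the multiplicative order of $z$ in $\mathbb{F}_{2^t}^*$. Then $m$ is good if and only if $\rho$ is not injective on $\mathcal{D}$.
   Context: $\mathrm{ord}_m(2)$ is the multiplicative order of $2$ modulo $m$. The canonical set of $m$ is $S_m=\{s_{01},s_{10},s_{11}\}\subseteq\mathbb{Z}_m$, where for $\sigma=(\sigma_1,\sigma_2)\in\{0,1\}^2\setminus\{(0,0)\}$, $s_\sigma$ is the unique element of $\mathbb{Z}_m$ with $s_\sigma\equiv\sigma_1 \pmod{p_1^{\alpha_1}}$ and $s_\sigma\equiv \sigma_2\pmod{p_2^{\alpha_2}}$ (so $s_{11}=1$). An $S_m$-decoding polynomial is a polynomial $P(X)\in\mathbb{F}_{2^t}[X]$ such that $P(\gamma^s)=0$ for every $s\in S_m$ and $P(1)=1$. The number $m$ is called good if there exists an $S_m$-decoding polynomial with fewer than $4$ monomials (nonzero terms). *)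

theory Defs
  imports "HOL-Number_Theory.Number_Theory" "HOL-Computational_Algebra.Polynomial"
begin

definition elem_ord :: "'a::field \<Rightarrow> nat" where
  "elem_ord z = (if \<exists>n>0. z ^ n = 1 then (LEAST n. n > 0 \<and> z ^ n = 1) else 0)"

text \<open>Canonical set S_m, as a set of residues in {0..<m}: for m = q1*q2 with coprime q1,q2,
  s_sigma is the element of Z_m congruent to sigma1 mod q1 and sigma2 mod q2.\<close>
definition canonical_elem :: "nat \<Rightarrow> nat \<Rightarrow> nat \<Rightarrow> nat \<Rightarrow> nat" where
  "canonical_elem q1 q2 a b = (THE s. s < q1 * q2 \<and> s mod q1 = a \<and> s mod q2 = b)"

definition canonical_set :: "nat \<Rightarrow> nat \<Rightarrow> nat set" where
  "canonical_set q1 q2 = {canonical_elem q1 q2 0 1, canonical_elem q1 q2 1 0, canonical_elem q1 q2 1 1}"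

definition num_monomials :: "'a::zero poly \<Rightarrow> nat" where
  "num_monomials P = card {i. coeff P i \<noteq> 0}"

definition decoding_poly :: "'a::field \<Rightarrow> nat set \<Rightarrow> 'a poly \<Rightarrow> bool" where
  "decoding_poly \<gamma> S P \<longleftrightarrow> (\<forall>s\<in>S. poly P (\<gamma> ^ s) = 0) \<and> poly P 1 = 1"

definition good :: "'a::field \<Rightarrow> nat \<Rightarrow> nat \<Rightarrow> bool" where
  "good \<gamma> q1 q2 \<longleftrightarrow> (\<exists>P. decoding_poly \<gamma> (canonical_set q1 q2) P \<and> num_monomials P < 4)"

definition rho :: "'a::field \<times> 'a \<Rightarrow> 'a" where
  "rho = (\<lambda>(z1, z2). (1 + inverse z2) * inverse (1 + inverse z1))"

end

theory Submission
  imports Defs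
begin

(* Put q1 = p1^a1 and q2 = p2^a2. By the Chinese remainder theorem \<gamma> = \<gamma>1 \<gamma>2 with \<gamma>1 = \<gamma>^s10 of
   order dividing q1 and \<gamma>2 = \<gamma>^s01 of order dividing q2; the points \<gamma>^s, s \<in> S_m, are \<gamma>2, \<gamma>1 and
   \<gamma>1 \<gamma>2, and every pair (z1, z2) of a q1-th and a q2-th root of unity is (\<gamma>1^u, \<gamma>2^u) for some u.
   Dividing a decoding polynomial a X^i + b X^j + c X^k by X^i turns the decoding conditions into a
   linear system in a, b, c whose coefficients are z = (\<gamma>1^(j-i), \<gamma>2^(j-i)) and
   w = (\<gamma>1^(k-i), \<gamma>2^(k-i)). Eliminating a, b, c shows that the system is solvable iff z and w are
   distinct pairs with no entry 1 and z1 (1 - w1) (z2 - w2) = z2 (1 - w2) (z1 - w1), which in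
   characteristic 2 says exactly rho z = rho w. *)

lemma cong_imp_power_eq:
  fixes z :: "'a::monoid_mult"
  assumes "z ^ q = 1" and "[i = j] (mod q)"
  shows "z ^ i = z ^ j"
proof -
  have shift: "z ^ (l * q + k) = z ^ k" for k l
    by (simp add: power_add power_mult mult.commute[of l] assms(1))
  consider "j \<le> i" | "i \<le> j" by linarith
  then show ?thesis
  proof cases
    case 1
    then obtain l where "i = l * q + j" using assms(2) cong_le_nat by blast
    then show ?thesis using shift by simp
  next
    case 2
    then obtain l where "j = l * q + i" using assms(2) cong_le_nat cong_sym by blast
    then show ?thesis using shift by simp
  qed
qed

lemma elem_ord_dvd_iff:
  fixes z :: "'a::field"
  shows "elem_ord z dvd n \<longleftrightarrow> z ^ n = 1"
proof (cases "\<exists>k>0. z ^ k = 1")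
  case True
  define d where "d = elem_ord z"
  have d_Least: "d = (LEAST k. k > 0 \<and> z ^ k = 1)"
    using True unfolding d_def elem_ord_def by simp
  have "d > 0" and "z ^ d = 1"
    using LeastI_ex[OF True] unfolding d_Least by auto
  have minimal: "z ^ k \<noteq> 1" if "0 < k" "k < d" for k
    using not_less_Least[of k] that unfolding d_Least by blast
  show ?thesis unfolding d_def[symmetric]
  proof
    assume "d dvd n"
    then obtain l where "n = d * l" by blast
    then show "z ^ n = 1" by (simp add: power_mult \<open>z ^ d = 1\<close>)
  next
    assume "z ^ n = 1"
    moreover have "z ^ n = z ^ (n mod d)"
      using cong_imp_power_eq[OF \<open>z ^ d = 1\<close>] cong_mod_right[of n n d] cong_refl by blast
    ultimately have "n mod d = 0"
      using minimal[of "n mod d"] mod_less_divisor[OF \<open>d > 0\<close>, of n] by auto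
    then show "d dvd n" by (simp add: dvd_eq_mod_eq_0)
  qed
next
  case False
  then have "elem_ord z = 0" unfolding elem_ord_def by (rule if_not_P)
  moreover have "z ^ n = 1 \<longleftrightarrow> n = 0" using False by (metis gr0I power_0)
  ultimately show ?thesis by simp
qed

lemma roots_of_unity_finite_card_le:
  fixes n :: nat
  assumes "n > 0"
  shows "finite {z::'a::idom. z ^ n = 1}" and "card {z::'a. z ^ n = 1} \<le> n"
proof -
  define p :: "'a poly" where "p = monom 1 n + [:-1:]"
  have roots: "{z. z ^ n = 1} = {z. poly p z = 0}"
    unfolding p_def by (simp add: poly_monom)
  have "degree p = n"
    unfolding p_def using assms by (subst degree_add_eq_left) (simp_all add: degree_monom_eq)
  then have "p \<noteq> 0" using assms by auto
  show "finite {z::'a. z ^ n = 1}" unfolding roots by (rule poly_roots_finite[OF \<open>p \<noteq> 0\<close>])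
  show "card {z::'a. z ^ n = 1} \<le> n"
    unfolding roots using card_poly_roots_bound[OF \<open>p \<noteq> 0\<close>] \<open>degree p = n\<close> by simp
qed

lemma root_of_unity_is_power:
  fixes \<gamma> z :: "'a::field"
  assumes "elem_ord \<gamma> = m" and "m > 0" and "z ^ m = 1"
  shows "\<exists>u. z = \<gamma> ^ u"
proof -
  have "\<gamma> ^ m = 1" using elem_ord_dvd_iff[of \<gamma> m] assms(1) by simp
  then have "\<gamma> \<noteq> 0" using \<open>m > 0\<close> by (auto simp: power_0_left)
  have "inj_on (\<lambda>i. \<gamma> ^ i) {..<m}"
  proof (rule linorder_inj_onI')
    fix i j assume "i \<in> {..<m}" "j \<in> {..<m}" "i < j"
    show "\<gamma> ^ i \<noteq> \<gamma> ^ j"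
    proof
      assume "\<gamma> ^ i = \<gamma> ^ j"
      also have "\<gamma> ^ j = \<gamma> ^ i * \<gamma> ^ (j - i)"
        using \<open>i < j\<close> by (simp flip: power_add)
      finally have "\<gamma> ^ (j - i) = 1" using \<open>\<gamma> \<noteq> 0\<close> by simp
      then have "m dvd j - i" using elem_ord_dvd_iff[of \<gamma> "j - i"] assms(1) by simp
      then have "m \<le> j - i" using \<open>i < j\<close> by (simp add: dvd_imp_le)
      then show False using \<open>j \<in> {..<m}\<close> by simp
    qed
  qed
  then have card_powers: "card ((\<lambda>i. \<gamma> ^ i) ` {..<m}) = m" by (simp add: card_image)
  have "(\<gamma> ^ i) ^ m = 1" for i
    by (metis \<open>\<gamma> ^ m = 1\<close> power_mult mult.commute power_one)
  then have powers_roots: "(\<lambda>i. \<gamma> ^ i) ` {..<m} \<subseteq> {z::'a. z ^ m = 1}" by auto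
  have finite_roots: "finite {z::'a. z ^ m = 1}" and card_roots: "card {z::'a. z ^ m = 1} \<le> m"
    using roots_of_unity_finite_card_le[OF \<open>m > 0\<close>] by blast+
  have "card ((\<lambda>i. \<gamma> ^ i) ` {..<m}) = card {z::'a. z ^ m = 1}"
    using card_mono[OF finite_roots powers_roots] card_roots card_powers by linarith
  then have "(\<lambda>i. \<gamma> ^ i) ` {..<m} = {z::'a. z ^ m = 1}"
    by (rule card_subset_eq[OF finite_roots powers_roots])
  then show ?thesis using assms(3) by blast
qed

lemma canonical_elem_mod:
  fixes q1 q2 a b :: nat
  assumes "coprime q1 q2" and "a < q1" and "b < q2"
  shows "canonical_elem q1 q2 a b mod q1 = a" and "canonical_elem q1 q2 a b mod q2 = b"
proof -
  have "\<exists>!s. s < q1 * q2 \<and> [s = a] (mod q1) \<and> [s = b] (mod q2)"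
    using binary_chinese_remainder_unique_nat[OF assms(1), of a b] assms(2,3) by simp
  then have "\<exists>!s. s < q1 * q2 \<and> s mod q1 = a \<and> s mod q2 = b"
    using assms(2,3) by (simp add: cong_def)
  then have "canonical_elem q1 q2 a b < q1 * q2 \<and> canonical_elem q1 q2 a b mod q1 = a
      \<and> canonical_elem q1 q2 a b mod q2 = b"
    unfolding canonical_elem_def by (rule theI')
  then show "canonical_elem q1 q2 a b mod q1 = a" and "canonical_elem q1 q2 a b mod q2 = b"
    by simp_all
qed

lemma power_canonical_elem:
  fixes z1 z2 :: "'a::comm_monoid_mult"
  assumes "coprime q1 q2" and "a < q1" and "b < q2" and "z1 ^ q1 = 1" and "z2 ^ q2 = 1"
  shows "(z1 * z2) ^ canonical_elem q1 q2 a b = z1 ^ a * z2 ^ b"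
proof -
  let ?s = "canonical_elem q1 q2 a b"
  have "[?s = a] (mod q1)" and "[?s = b] (mod q2)"
    unfolding cong_def using canonical_elem_mod[OF assms(1-3)] assms(2,3) by simp_all
  then have "z1 ^ ?s = z1 ^ a" and "z2 ^ ?s = z2 ^ b"
    using cong_imp_power_eq assms(4,5) by blast+
  then show ?thesis by (simp add: power_mult_distrib)
qed

lemma num_monomials_less_4_iff:
  fixes P :: "'a::comm_monoid_add poly"
  shows "num_monomials P < 4 \<longleftrightarrow> (\<exists>a b c i j k. P = monom a i + monom b j + monom c k)"
proof
  let ?I = "{n. coeff P n \<noteq> 0}"
  assume "num_monomials P < 4"
  then have "card ?I \<le> 3" unfolding num_monomials_def by simp
  have "finite ?I"
    by (rule finite_subset[of _ "{..degree P}"]) (auto intro: le_degree)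
  then have "infinite (UNIV - ?I)" by (simp add: Diff_infinite_finite)
  \<comment> \<open>pad the support with unused exponents to exactly three\<close>
  then obtain B where B: "B \<subseteq> UNIV - ?I" "finite B" "card B = 3 - card ?I"
    using infinite_arbitrarily_large by blast
  have "card (?I \<union> B) = 3"
    using B \<open>finite ?I\<close> \<open>card ?I \<le> 3\<close> by (subst card_Un_disjoint) auto
  then obtain i j k where "?I \<union> B = {i, j, k}" "i \<noteq> j" "j \<noteq> k" "i \<noteq> k"
    by (auto simp: card_3_iff)
  then have "P = monom (coeff P i) i + monom (coeff P j) j + monom (coeff P k) k"
    by (auto simp: poly_eq_iff)
  then show "\<exists>a b c i j k. P = monom a i + monom b j + monom c k" by blast
next
  assume "\<exists>a b c i j k. P = monom a i + monom b j + monom c k"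
  then obtain a b c i j k where P: "P = monom a i + monom b j + monom c k" by blast
  have "{n. coeff P n \<noteq> 0} \<subseteq> {i, j, k}" unfolding P by auto
  then have "num_monomials P \<le> card {i, j, k}"
    unfolding num_monomials_def by (intro card_mono) auto
  also have "\<dots> \<le> 3" by (simp add: card_insert_if)
  finally show "num_monomials P < 4" by simp
qed

(* The conditions on a X^i + b X^j + c X^k, divided by X^i, at the points 1, x, y and x y, where
   z1, z2 are the values of X^(j-i) and w1, w2 those of X^(k-i) at x and y. *)
definition trinomial_system :: "'a::field \<Rightarrow> 'a \<Rightarrow> 'a \<Rightarrow> 'a \<Rightarrow> bool" where
  "trinomial_system z1 z2 w1 w2 \<longleftrightarrow> (\<exists>a b c. a + b + c = 1 \<and> a + b * z1 + c * w1 = 0 \<and>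
     a + b * z2 + c * w2 = 0 \<and> a + b * (z1 * z2) + c * (w1 * w2) = 0)"

lemma trinomial_system_iff_vanishing:
  fixes x y :: "'a::field"
  assumes "x \<noteq> 0" and "y \<noteq> 0"
  shows "trinomial_system (x ^ j / x ^ i) (y ^ j / y ^ i) (x ^ k / x ^ i) (y ^ k / y ^ i) \<longleftrightarrow>
    (\<exists>a b c. poly (monom a i + monom b j + monom c k) 1 = 1 \<and>
      poly (monom a i + monom b j + monom c k) x = 0 \<and>
      poly (monom a i + monom b j + monom c k) y = 0 \<and>
      poly (monom a i + monom b j + monom c k) (x * y) = 0)"
proof -
  have vanish: "poly (monom a i + monom b j + monom c k) s = 0 \<longleftrightarrow>
      a + b * (s ^ j / s ^ i) + c * (s ^ k / s ^ i) = 0" if "s \<noteq> 0" for a b c s :: 'a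
  proof -
    have "poly (monom a i + monom b j + monom c k) s =
        s ^ i * (a + b * (s ^ j / s ^ i) + c * (s ^ k / s ^ i))"
      using that by (simp add: poly_monom field_simps)
    then show ?thesis using that by simp
  qed
  have at_1: "poly (monom a i + monom b j + monom c k) 1 = a + b + c" for a b c :: 'a
    by (simp add: poly_monom)
  have xy: "(x * y) ^ n / (x * y) ^ i = (x ^ n / x ^ i) * (y ^ n / y ^ i)" for n
    by (simp add: power_mult_distrib)
  have "x * y \<noteq> 0" using assms by simp
  show ?thesis unfolding trinomial_system_def at_1 vanish[OF \<open>x \<noteq> 0\<close>]
    vanish[OF \<open>y \<noteq> 0\<close>] vanish[OF \<open>x * y \<noteq> 0\<close>] xy ..
qed

lemma linear_2x2_solution:
  fixes p q u v :: "'a::comm_ring_1"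
  assumes "p + q = 1" and "p * u + q * v = 0"
  shows "p * (v - u) = v" and "q * (u - v) = u"
proof -
  have "p * (v - u) = (p + q) * v - (p * u + q * v)" and "q * (u - v) = (p + q) * u - (p * u + q * v)"
    by (simp_all add: algebra_simps)
  then show "p * (v - u) = v" and "q * (u - v) = u" using assms by simp_all
qed

lemma trinomial_system_necessary:
  fixes z1 z2 w1 w2 :: "'a::field"
  assumes "trinomial_system z1 z2 w1 w2" and "z1 \<noteq> 0" "z2 \<noteq> 0" "w1 \<noteq> 0" "w2 \<noteq> 0"
  shows "z1 \<noteq> 1 \<and> z2 \<noteq> 1 \<and> w1 \<noteq> 1 \<and> w2 \<noteq> 1 \<and> z1 \<noteq> w1 \<and>
    z1 * (1 - w1) * (z2 - w2) = z2 * (1 - w2) * (z1 - w1)"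
proof -
  obtain a b c where e0: "a + b + c = 1" and e1: "a + b * z1 + c * w1 = 0"
    and e2: "a + b * z2 + c * w2 = 0" and e3: "a + b * (z1 * z2) + c * (w1 * w2) = 0"
    using assms(1) unfolding trinomial_system_def by blast
  have "b * (1 - z1) + c * (1 - w1) = (a + b + c) - (a + b * z1 + c * w1)"
    and "b * (1 - z1) * z2 + c * (1 - w1) * w2 = (a + b * z2 + c * w2) - (a + b * (z1 * z2) + c * (w1 * w2))"
    by (simp_all add: algebra_simps)
  then have "b * (1 - z1) + c * (1 - w1) = 1" and "b * (1 - z1) * z2 + c * (1 - w1) * w2 = 0"
    using e0 e1 e2 e3 by simp_all
  then have b1: "b * (1 - z1) * (w2 - z2) = w2" and c1: "c * (1 - w1) * (z2 - w2) = z2"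
    using linear_2x2_solution by blast+
  have "b * (1 - z2) + c * (1 - w2) = (a + b + c) - (a + b * z2 + c * w2)"
    and "b * (1 - z2) * z1 + c * (1 - w2) * w1 = (a + b * z1 + c * w1) - (a + b * (z1 * z2) + c * (w1 * w2))"
    by (simp_all add: algebra_simps)
  then have "b * (1 - z2) + c * (1 - w2) = 1" and "b * (1 - z2) * z1 + c * (1 - w2) * w1 = 0"
    using e0 e1 e2 e3 by simp_all
  then have b2: "b * (1 - z2) * (w1 - z1) = w1" and c2: "c * (1 - w2) * (z1 - w1) = z1"
    using linear_2x2_solution by blast+
  have "z1 \<noteq> 1" using b1 \<open>w2 \<noteq> 0\<close> by auto
  moreover have "w1 \<noteq> 1" using c1 \<open>z2 \<noteq> 0\<close> by auto
  moreover have "z2 \<noteq> 1" using b2 \<open>w1 \<noteq> 0\<close> by auto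
  moreover have "w2 \<noteq> 1" using c2 \<open>z1 \<noteq> 0\<close> by auto
  moreover have "z1 \<noteq> w1" using c2 \<open>z1 \<noteq> 0\<close> by auto
  moreover have "z1 * (1 - w1) * (z2 - w2) = z2 * (1 - w2) * (z1 - w1)"
  proof -
    have "z1 * (1 - w1) * (z2 - w2) = c * (1 - w2) * (z1 - w1) * ((1 - w1) * (z2 - w2))"
      using c2 by simp
    also have "\<dots> = c * (1 - w1) * (z2 - w2) * ((1 - w2) * (z1 - w1))"
      by (simp only: ac_simps)
    finally show ?thesis using c1 by simp
  qed
  ultimately show ?thesis by blast
qed

lemma trinomial_system_sufficient:
  fixes z1 z2 w1 w2 :: "'a::field"
  assumes "z1 \<noteq> 1" and "w1 \<noteq> 1" and "z2 \<noteq> w2"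
    and cross: "z1 * (1 - w1) * (z2 - w2) = z2 * (1 - w2) * (z1 - w1)"
  shows "trinomial_system z1 z2 w1 w2"
proof -
  \<comment> \<open>the values of b and c forced in the proof of necessity\<close>
  define b where "b = w2 / ((1 - z1) * (w2 - z2))"
  define c where "c = z2 / ((1 - w1) * (z2 - w2))"
  define D where "D = (1 - z1) * (1 - w1) * (w2 - z2)"
  have b: "b * ((1 - z1) * (w2 - z2)) = w2" and c: "c * ((1 - w1) * (z2 - w2)) = z2"
    unfolding b_def c_def using assms(1-3) by simp_all
  have "D \<noteq> 0" unfolding D_def using assms(1-3) by simp
  have "(w2 - z2) * (1 - b - c + b * z1 + c * w1) =
      (w2 - z2) - b * ((1 - z1) * (w2 - z2)) + c * ((1 - w1) * (z2 - w2))"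
    by (simp add: algebra_simps)
  also have "\<dots> = 0" using b c by simp
  finally have e1: "1 - b - c + b * z1 + c * w1 = 0" using assms(3) by simp
  have "D * (1 - b - c + b * z2 + c * w2) =
      D - (1 - w1) * (1 - z2) * (b * ((1 - z1) * (w2 - z2))) + (1 - z1) * (1 - w2) * (c * ((1 - w1) * (z2 - w2)))"
    unfolding D_def by (simp add: algebra_simps)
  also have "\<dots> = z1 * (1 - w1) * (z2 - w2) - z2 * (1 - w2) * (z1 - w1)"
    unfolding b c D_def by (simp add: algebra_simps)
  finally have e2: "1 - b - c + b * z2 + c * w2 = 0" using cross \<open>D \<noteq> 0\<close> by simp
  have "D * (1 - b - c + b * (z1 * z2) + c * (w1 * w2)) =
      D - (1 - w1) * (1 - z1 * z2) * (b * ((1 - z1) * (w2 - z2)))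
        + (1 - z1) * (1 - w1 * w2) * (c * ((1 - w1) * (z2 - w2)))"
    unfolding D_def by (simp add: algebra_simps)
  also have "\<dots> = z1 * (1 - w1) * (z2 - w2) - z2 * (1 - w2) * (z1 - w1)"
    unfolding b c D_def by (simp add: algebra_simps)
  finally have e3: "1 - b - c + b * (z1 * z2) + c * (w1 * w2) = 0" using cross \<open>D \<noteq> 0\<close> by simp
  show ?thesis unfolding trinomial_system_def
    using e1 e2 e3 by (intro exI[of _ "1 - b - c"] exI[of _ b] exI[of _ c]) simp
qed

lemma rho_eq_iff_char_2:
  fixes z1 z2 w1 w2 :: "'a::field"
  assumes char_2: "(2::'a) = 0" and "z1 \<noteq> 0" "z2 \<noteq> 0" "w1 \<noteq> 0" "w2 \<noteq> 0" "z1 \<noteq> 1" "w1 \<noteq> 1"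
  shows "rho (z1, z2) = rho (w1, w2) \<longleftrightarrow> z1 * (1 - w1) * (z2 - w2) = z2 * (1 - w2) * (z1 - w1)"
proof -
  have "x + x = 0" for x :: 'a using char_2 by (metis mult_2 mult_zero_left)
  then have neg: "- x = x" for x :: 'a by (metis add_eq_0_iff2)
  have rho: "rho (x, y) = x * (1 - y) / (y * (1 - x))" if "x \<noteq> 0" "y \<noteq> 0" "x \<noteq> 1" for x y :: 'a
  proof -
    have "rho (x, y) = (1 - inverse y) * inverse (1 - inverse x)"
      unfolding rho_def by (simp add: diff_conv_add_uminus neg)
    then show ?thesis using that by (simp add: field_simps)
  qed
  have "z2 * (1 - z1) \<noteq> 0" and "w2 * (1 - w1) \<noteq> 0" using assms(2-7) by simp_all
  then have "rho (z1, z2) = rho (w1, w2) \<longleftrightarrow>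
      z1 * (1 - z2) * (w2 * (1 - w1)) = w1 * (1 - w2) * (z2 * (1 - z1))"
    using assms(2-7) by (simp add: rho frac_eq_eq)
  also have "\<dots> \<longleftrightarrow> z1 * (1 - w1) * (z2 - w2) = z2 * (1 - w2) * (z1 - w1)"
  proof -
    have "z1 * (1 - z2) * (w2 * (1 - w1)) - w1 * (1 - w2) * (z2 * (1 - z1)) =
        z2 * (1 - w2) * (z1 - w1) - z1 * (1 - w1) * (z2 - w2)"
      by (simp add: algebra_simps)
    then show ?thesis by (metis eq_iff_diff_eq_0)
  qed
  finally show ?thesis .
qed

lemma trinomial_system_iff_rho_collision:
  fixes z1 z2 w1 w2 :: "'a::field"
  assumes char_2: "(2::'a) = 0" and nonzero: "z1 \<noteq> 0" "z2 \<noteq> 0" "w1 \<noteq> 0" "w2 \<noteq> 0"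
  shows "trinomial_system z1 z2 w1 w2 \<longleftrightarrow>
    z1 \<noteq> 1 \<and> z2 \<noteq> 1 \<and> w1 \<noteq> 1 \<and> w2 \<noteq> 1 \<and> (z1, z2) \<noteq> (w1, w2) \<and> rho (z1, z2) = rho (w1, w2)"
proof
  assume "trinomial_system z1 z2 w1 w2"
  then show "z1 \<noteq> 1 \<and> z2 \<noteq> 1 \<and> w1 \<noteq> 1 \<and> w2 \<noteq> 1 \<and> (z1, z2) \<noteq> (w1, w2) \<and> rho (z1, z2) = rho (w1, w2)"
    using trinomial_system_necessary[OF _ nonzero] rho_eq_iff_char_2[OF char_2 nonzero] by auto
next
  assume collision: "z1 \<noteq> 1 \<and> z2 \<noteq> 1 \<and> w1 \<noteq> 1 \<and> w2 \<noteq> 1 \<and> (z1, z2) \<noteq> (w1, w2) \<and> rho (z1, z2) = rho (w1, w2)"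
  then have cross: "z1 * (1 - w1) * (z2 - w2) = z2 * (1 - w2) * (z1 - w1)"
    using rho_eq_iff_char_2[OF char_2 nonzero] by blast
  have "z2 \<noteq> w2"
  proof
    assume "z2 = w2"
    then have "z2 * (1 - z2) * (z1 - w1) = 0" using cross by simp
    then show False using collision \<open>z2 = w2\<close> nonzero by simp
  qed
  then show "trinomial_system z1 z2 w1 w2"
    using trinomial_system_sufficient cross collision by blast
qed
locale split_root_of_unity =
  fixes \<gamma> :: "'a::field" and q1 q2 :: nat
  assumes coprime: "coprime q1 q2" and q1_gt_1: "1 < q1" and q2_gt_1: "1 < q2"
    and elem_ord_\<gamma>: "elem_ord \<gamma> = q1 * q2"
begin

definition \<gamma>1 :: 'a where "\<gamma>1 = \<gamma> ^ canonical_elem q1 q2 1 0"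

definition \<gamma>2 :: 'a where "\<gamma>2 = \<gamma> ^ canonical_elem q1 q2 0 1"

lemma \<gamma>_power_order: "\<gamma> ^ (q1 * q2) = 1"
  using elem_ord_dvd_iff[of \<gamma> "q1 * q2"] by (simp add: elem_ord_\<gamma>)

lemma power_power_eq_1:
  assumes "q1 * q2 dvd s * q"
  shows "(\<gamma> ^ s) ^ q = 1"
  using assms elem_ord_dvd_iff[of \<gamma> "s * q"] by (simp add: elem_ord_\<gamma> power_mult)

lemma \<gamma>1_power_q1: "\<gamma>1 ^ q1 = 1"
proof -
  have "q2 dvd canonical_elem q1 q2 1 0"
    using canonical_elem_mod(2)[OF coprime] q1_gt_1 q2_gt_1 by (simp add: dvd_eq_mod_eq_0)
  then have "q1 * q2 dvd canonical_elem q1 q2 1 0 * q1" by (simp add: mult.commute)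
  then show ?thesis unfolding \<gamma>1_def by (rule power_power_eq_1)
qed

lemma \<gamma>2_power_q2: "\<gamma>2 ^ q2 = 1"
proof -
  have "q1 dvd canonical_elem q1 q2 0 1"
    using canonical_elem_mod(1)[OF coprime] q1_gt_1 q2_gt_1 by (simp add: dvd_eq_mod_eq_0)
  then have "q1 * q2 dvd canonical_elem q1 q2 0 1 * q2" by simp
  then show ?thesis unfolding \<gamma>2_def by (rule power_power_eq_1)
qed

lemma \<gamma>1_mult_\<gamma>2: "\<gamma>1 * \<gamma>2 = \<gamma>"
proof -
  let ?s = "canonical_elem q1 q2 1 0 + canonical_elem q1 q2 0 1"
  have "[?s = 1] (mod q1)" and "[?s = 1] (mod q2)"
    unfolding cong_def using canonical_elem_mod[OF coprime] q1_gt_1 q2_gt_1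
    by (simp_all add: mod_add_eq[symmetric])
  then have "[?s = 1] (mod q1 * q2)" using coprime coprime_cong_mult_nat by blast
  then have "\<gamma> ^ ?s = \<gamma> ^ 1" by (rule cong_imp_power_eq[OF \<gamma>_power_order])
  then show ?thesis unfolding \<gamma>1_def \<gamma>2_def by (simp add: power_add)
qed

lemma power_canonical_elem_\<gamma>:
  assumes "a < q1" and "b < q2"
  shows "\<gamma> ^ canonical_elem q1 q2 a b = \<gamma>1 ^ a * \<gamma>2 ^ b"
  using power_canonical_elem[OF coprime assms \<gamma>1_power_q1 \<gamma>2_power_q2] by (simp add: \<gamma>1_mult_\<gamma>2)

lemma decoding_poly_canonical_set_iff:
  "decoding_poly \<gamma> (canonical_set q1 q2) P \<longleftrightarrow>
    poly P 1 = 1 \<and> poly P \<gamma>1 = 0 \<and> poly P \<gamma>2 = 0 \<and> poly P (\<gamma>1 * \<gamma>2) = 0"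
  using power_canonical_elem_\<gamma>[of 0 1] power_canonical_elem_\<gamma>[of 1 0] power_canonical_elem_\<gamma>[of 1 1]
    q1_gt_1 q2_gt_1
  unfolding decoding_poly_def canonical_set_def by auto

lemma roots_of_unity_pair_is_power:
  assumes "z1 ^ q1 = 1" and "z2 ^ q2 = 1"
  shows "\<exists>u. z1 = \<gamma>1 ^ u \<and> z2 = \<gamma>2 ^ u"
proof -
  have "(z1 * z2) ^ (q1 * q2) = (z1 ^ q1) ^ q2 * (z2 ^ q2) ^ q1"
    by (simp add: power_mult_distrib flip: power_mult) (simp add: mult.commute)
  then have "(z1 * z2) ^ (q1 * q2) = 1" using assms by simp
  then obtain u where u: "z1 * z2 = \<gamma> ^ u"
    using root_of_unity_is_power[OF elem_ord_\<gamma>] q1_gt_1 q2_gt_1 by fastforce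
  have "\<gamma>1 ^ u = (z1 * z2) ^ canonical_elem q1 q2 1 0" and "\<gamma>2 ^ u = (z1 * z2) ^ canonical_elem q1 q2 0 1"
    unfolding \<gamma>1_def \<gamma>2_def u by (simp_all flip: power_mult add: mult.commute)
  then have "\<gamma>1 ^ u = z1" and "\<gamma>2 ^ u = z2"
    using power_canonical_elem[OF coprime _ _ assms] q1_gt_1 q2_gt_1 by simp_all
  then show ?thesis by metis
qed

lemma good_iff_trinomial_system:
  "good \<gamma> q1 q2 \<longleftrightarrow> (\<exists>z1 z2 w1 w2 :: 'a. z1 ^ q1 = 1 \<and> w1 ^ q1 = 1 \<and> z2 ^ q2 = 1 \<and> w2 ^ q2 = 1 \<and>
     trinomial_system z1 z2 w1 w2)"
proof -
  have "\<gamma>1 \<noteq> 0" and "\<gamma>2 \<noteq> 0"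
    using \<gamma>1_power_q1 \<gamma>2_power_q2 q1_gt_1 q2_gt_1 by (auto simp: power_0_left)
  have "good \<gamma> q1 q2 \<longleftrightarrow> (\<exists>i j k a b c.
      poly (monom a i + monom b j + monom c k) 1 = 1 \<and>
      poly (monom a i + monom b j + monom c k) \<gamma>1 = 0 \<and>
      poly (monom a i + monom b j + monom c k) \<gamma>2 = 0 \<and>
      poly (monom a i + monom b j + monom c k) (\<gamma>1 * \<gamma>2) = 0)"
    unfolding good_def decoding_poly_canonical_set_iff num_monomials_less_4_iff by blast
  also have "\<dots> \<longleftrightarrow> (\<exists>i j k.
      trinomial_system (\<gamma>1 ^ j / \<gamma>1 ^ i) (\<gamma>2 ^ j / \<gamma>2 ^ i) (\<gamma>1 ^ k / \<gamma>1 ^ i) (\<gamma>2 ^ k / \<gamma>2 ^ i))"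
    by (simp only: trinomial_system_iff_vanishing[OF \<open>\<gamma>1 \<noteq> 0\<close> \<open>\<gamma>2 \<noteq> 0\<close>])
  also have "\<dots> \<longleftrightarrow> (\<exists>z1 z2 w1 w2 :: 'a. z1 ^ q1 = 1 \<and> w1 ^ q1 = 1 \<and> z2 ^ q2 = 1 \<and> w2 ^ q2 = 1 \<and>
      trinomial_system z1 z2 w1 w2)"
  proof
    assume "\<exists>i j k. trinomial_system (\<gamma>1 ^ j / \<gamma>1 ^ i) (\<gamma>2 ^ j / \<gamma>2 ^ i) (\<gamma>1 ^ k / \<gamma>1 ^ i) (\<gamma>2 ^ k / \<gamma>2 ^ i)"
    moreover have "(x ^ j / x ^ i) ^ q = 1" if "x ^ q = 1" for x :: 'a and i j q
    proof -
      have "(x ^ n) ^ q = 1" for n by (metis that power_mult mult.commute power_one)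
      then show ?thesis by (simp add: power_divide)
    qed
    ultimately show "\<exists>z1 z2 w1 w2 :: 'a. z1 ^ q1 = 1 \<and> w1 ^ q1 = 1 \<and> z2 ^ q2 = 1 \<and> w2 ^ q2 = 1 \<and>
        trinomial_system z1 z2 w1 w2"
      using \<gamma>1_power_q1 \<gamma>2_power_q2 by meson
  next
    assume "\<exists>z1 z2 w1 w2 :: 'a. z1 ^ q1 = 1 \<and> w1 ^ q1 = 1 \<and> z2 ^ q2 = 1 \<and> w2 ^ q2 = 1 \<and>
        trinomial_system z1 z2 w1 w2"
    then obtain z1 z2 w1 w2 :: 'a where roots: "z1 ^ q1 = 1" "w1 ^ q1 = 1" "z2 ^ q2 = 1" "w2 ^ q2 = 1"
      and system: "trinomial_system z1 z2 w1 w2" by blast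
    obtain u v where "z1 = \<gamma>1 ^ u" "z2 = \<gamma>2 ^ u" "w1 = \<gamma>1 ^ v" "w2 = \<gamma>2 ^ v"
      using roots_of_unity_pair_is_power roots by metis
    then have "trinomial_system (\<gamma>1 ^ u / \<gamma>1 ^ 0) (\<gamma>2 ^ u / \<gamma>2 ^ 0) (\<gamma>1 ^ v / \<gamma>1 ^ 0) (\<gamma>2 ^ v / \<gamma>2 ^ 0)"
      using system by simp
    then show "\<exists>i j k. trinomial_system (\<gamma>1 ^ j / \<gamma>1 ^ i) (\<gamma>2 ^ j / \<gamma>2 ^ i) (\<gamma>1 ^ k / \<gamma>1 ^ i) (\<gamma>2 ^ k / \<gamma>2 ^ i)"
      by blast
  qed
  finally show ?thesis .
qed

lemma good_iff_not_inj_on_rho: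
  assumes char_2: "(2::'a) = 0"
  shows "good \<gamma> q1 q2 \<longleftrightarrow> \<not> inj_on rho {(z1 :: 'a, z2 :: 'a). z1 \<noteq> 0 \<and> z1 \<noteq> 1 \<and> z2 \<noteq> 0 \<and> z2 \<noteq> 1 \<and>
    elem_ord z1 dvd q1 \<and> elem_ord z2 dvd q2}" (is "_ \<longleftrightarrow> \<not> inj_on rho ?D")
proof -
  have "0 < q1" and "0 < q2" using q1_gt_1 q2_gt_1 by simp_all
  then have root_nonzero: "z \<noteq> 0" if "z ^ q1 = 1 \<or> z ^ q2 = 1" for z :: 'a
    using that by (auto simp: zero_power)
  have D: "?D = {(z1, z2). z1 ^ q1 = 1 \<and> z2 ^ q2 = 1 \<and> z1 \<noteq> 1 \<and> z2 \<noteq> 1}"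
    using root_nonzero by (auto simp: elem_ord_dvd_iff)
  have "good \<gamma> q1 q2 \<longleftrightarrow> (\<exists>z1 z2 w1 w2 :: 'a. z1 ^ q1 = 1 \<and> w1 ^ q1 = 1 \<and> z2 ^ q2 = 1 \<and> w2 ^ q2 = 1 \<and>
      z1 \<noteq> 1 \<and> z2 \<noteq> 1 \<and> w1 \<noteq> 1 \<and> w2 \<noteq> 1 \<and> (z1, z2) \<noteq> (w1, w2) \<and> rho (z1, z2) = rho (w1, w2))"
    unfolding good_iff_trinomial_system
    using trinomial_system_iff_rho_collision[OF char_2] root_nonzero by (smt (verit))
  also have "\<dots> \<longleftrightarrow> \<not> inj_on rho ?D" unfolding D by (simp add: inj_on_def) blast
  finally show ?thesis .
qed

end

theorem theorem2:
  fixes p1 p2 a1 a2 m t :: nat and \<gamma> :: "'a::{field,finite}"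
  assumes "prime p1" "prime p2" "p1 > 2" "p2 > 2" "p1 \<noteq> p2"
    and "a1 > 0" "a2 > 0"
    and "m = p1 ^ a1 * p2 ^ a2"
    and "t = ord m 2"
    and "CHAR('a) = 2" "card (UNIV :: 'a set) = 2 ^ t"
    and "elem_ord \<gamma> = m"
  shows "good \<gamma> (p1 ^ a1) (p2 ^ a2) \<longleftrightarrow>
    \<not> inj_on rho {(z1 :: 'a, z2 :: 'a). z1 \<noteq> 0 \<and> z1 \<noteq> 1 \<and> z2 \<noteq> 0 \<and> z2 \<noteq> 1 \<and>
                        elem_ord z1 dvd p1 ^ a1 \<and> elem_ord z2 dvd p2 ^ a2}"
proof -
  \<comment> \<open>The hypotheses on t and on the size of the field only guarantee that \<gamma> exists; of the
    primes only the coprimality of p1^a1 and p2^a2 and that both exceed 1 are used.\<close>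
  interpret split_root_of_unity \<gamma> "p1 ^ a1" "p2 ^ a2"
  proof
    show "coprime (p1 ^ a1) (p2 ^ a2)" using primes_coprime[OF assms(1,2,5)] by simp
    show "1 < p1 ^ a1" and "1 < p2 ^ a2" using assms(3,4,6,7) by (intro one_less_power; simp)+
    show "elem_ord \<gamma> = p1 ^ a1 * p2 ^ a2" using assms(8,12) by simp
  qed
  have "(2::'a) = 0" using of_nat_CHAR[where 'a='a] assms(10) by simp
  then show ?thesis by (rule good_iff_not_inj_on_rho)
qed

end
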